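(* Let $G=(V,E)$ be an undirected multigraph, $0\le\delta\le1/3$, and $A\subseteq V$. Let $S\subseteq V$ cross $A$ and let $\lambda=w(S,V\setminus S)$. Suppose $w(S\cap A,A\setminus S)\le\lambda/2$ and $S\cap A$ is not $(1-\delta)$-boundary sparse in $A$. Let $X\in\{S\cap A,A\setminus S\}$ satisfy $w(X,V\setminus A)=\min\{w(S\cap A,V\setminus A),w(A\setminus S,V\setminus A)\}$. Then $w(X,V\setminus X)\le(1+\tfrac{3\delta}{4})\lambda$.
   Context: $w(P,Q)$ is the number of edges (with multiplicity) between disjoint sets $P$ and $Q$. $S$ crosses $A$ if $S\cap A$ and $A\setminus S$ are both nonempty. For $C\subseteq V$, a set $U\subsetneq C$ is $(1-\delta)$-boundary sparse in $C$ if $w(U,C\setminus U)<(1-\delta)\min\{w(U,V\setminus C),\,w(C\setminus U,V\setminus C)\}$. *)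

theory Defs
  imports Complex_Main
begin

text \<open>An undirected multigraph on a finite vertex set V is modelled by a symmetric
  multiplicity function m: m u v is the number of edges between u and v.\<close>

definition multigraph :: "'a set \<Rightarrow> ('a \<Rightarrow> 'a \<Rightarrow> nat) \<Rightarrow> bool" where
  "multigraph V m \<longleftrightarrow> finite V \<and> (\<forall>u v. m u v = m v u)
     \<and> (\<forall>u v. m u v \<noteq> 0 \<longrightarrow> u \<in> V \<and> v \<in> V)"

definition w :: "('a \<Rightarrow> 'a \<Rightarrow> nat) \<Rightarrow> 'a set \<Rightarrow> 'a set \<Rightarrow> nat" where
  "w m P Q = (\<Sum>p\<in>P. \<Sum>q\<in>Q. m p q)"

definition crosses :: "'a set \<Rightarrow> 'a set \<Rightarrow> bool" where
  "crosses S A \<longleftrightarrow> S \<inter> A \<noteq> {} \<and> A - S \<noteq> {}"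

definition boundary_sparse ::
  "'a set \<Rightarrow> ('a \<Rightarrow> 'a \<Rightarrow> nat) \<Rightarrow> real \<Rightarrow> 'a set \<Rightarrow> 'a set \<Rightarrow> bool" where
  "boundary_sparse V m \<delta> C U \<longleftrightarrow> U \<subset> C \<and>
     real (w m U (C - U)) < (1 - \<delta>) * real (min (w m U (V - C)) (w m (C - U) (V - C)))"

end

theory Submission
  imports Defs
begin

text \<open>The boundary of X splits into the edges inside A, which are exactly the
  edges between S \<inter> A and A - S (at most \<lambda>/2), and the edges leaving A.
  Since S \<inter> A is not boundary sparse and X minimises the edges leaving A, the
  latter number is at most w(S \<inter> A, A - S) / (1 - \<delta>). Hence
  w(X, V - X) \<le> (2 - \<delta>) / (2 (1 - \<delta>)) \<lambda>, and this factor is at most 1 + 3\<delta>/4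
  exactly when \<delta> (1 - 3\<delta>) \<ge> 0.\<close>

lemma w_union_right:
  assumes "finite B" "finite C" "B \<inter> C = {}"
  shows "w m X (B \<union> C) = w m X B + w m X C"
  unfolding w_def by (simp add: sum.union_disjoint[OF assms] sum.distrib)

lemma w_commute:
  assumes "\<And>u v. m u v = m v u"
  shows "w m P Q = w m Q P"
  unfolding w_def using assms by (subst sum.swap) simp

lemma w_boundary_split:
  assumes "finite V" "X \<subseteq> A" "A \<subseteq> V"
  shows "w m X (V - X) = w m X (A - X) + w m X (V - A)"
proof -
  have "V - X = (A - X) \<union> (V - A)" using assms by auto
  moreover have "finite (A - X)" "finite (V - A)"
    using assms by (auto intro: finite_subset)
  moreover have "(A - X) \<inter> (V - A) = {}" by auto
  ultimately show ?thesis by (simp add: w_union_right)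
qed

lemma w_side_complement:
  assumes "\<And>u v. m u v = m v u" "X \<in> {S \<inter> A, A - S}"
  shows "w m X (A - X) = w m (S \<inter> A) (A - S)"
proof -
  have "A - (S \<inter> A) = A - S" "A - (A - S) = S \<inter> A" by auto
  then show ?thesis using assms by (auto simp: w_commute)
qed

lemma boundary_bound_arith:
  fixes a M l \<delta> :: real
  assumes "0 \<le> \<delta>" "\<delta> \<le> 1/3" "0 \<le> M" "(1 - \<delta>) * M \<le> a" "a \<le> l / 2"
  shows "a + M \<le> (1 + 3 * \<delta> / 4) * l"
proof -
  have l_nonneg: "0 \<le> l" using assms mult_nonneg_nonneg[of "1 - \<delta>" M] by linarith
  have factor: "(2 - \<delta>) / 2 \<le> (1 - \<delta>) * (1 + 3 * \<delta> / 4)"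
  proof -
    have "(1 - \<delta>) * (1 + 3 * \<delta> / 4) - (2 - \<delta>) / 2 = \<delta> * (1 - 3 * \<delta>) / 4"
      by (simp add: field_simps)
    moreover have "0 \<le> \<delta> * (1 - 3 * \<delta>)" using assms by simp
    ultimately show ?thesis by linarith
  qed
  have "(1 - \<delta>) * (a + M) \<le> (2 - \<delta>) * a"
    using assms by (simp add: algebra_simps)
  also have "\<dots> \<le> (2 - \<delta>) / 2 * l"
    using assms mult_left_mono[of a "l / 2" "2 - \<delta>"] by simp
  also have "\<dots> \<le> (1 - \<delta>) * ((1 + 3 * \<delta> / 4) * l)"
    using mult_right_mono[OF factor l_nonneg] by (simp add: algebra_simps)
  finally show ?thesis using assms by simp
qed

theorem mainTheorem9:
  fixes V :: "'a set" and m :: "'a \<Rightarrow> 'a \<Rightarrow> nat" and \<delta> :: real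
    and A S X :: "'a set"
  assumes "multigraph V m"
    and "0 \<le> \<delta>" and "\<delta> \<le> 1/3"
    and "A \<subseteq> V" and "S \<subseteq> V"
    and "crosses S A"
    and "real (w m (S \<inter> A) (A - S)) \<le> real (w m S (V - S)) / 2"
    and "\<not> boundary_sparse V m \<delta> A (S \<inter> A)"
    and "X \<in> {S \<inter> A, A - S}"
    and "w m X (V - A) = min (w m (S \<inter> A) (V - A)) (w m (A - S) (V - A))"
  shows "real (w m X (V - X)) \<le> (1 + 3 * \<delta> / 4) * real (w m S (V - S))"
proof -
  have "finite V" and sym: "\<And>u v. m u v = m v u"
    using assms(1) unfolding multigraph_def by auto
  have "X \<subseteq> A" using assms(9) by auto
  have split: "w m X (V - X) = w m (S \<inter> A) (A - S) + w m X (V - A)"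
    using w_boundary_split[OF \<open>finite V\<close> \<open>X \<subseteq> A\<close> assms(4)] w_side_complement[OF sym assms(9)]
    by simp
  have "S \<inter> A \<subset> A" and "A - S \<inter> A = A - S"
    using assms(6) unfolding crosses_def by auto
  then have not_sparse: "(1 - \<delta>) * real (w m X (V - A)) \<le> real (w m (S \<inter> A) (A - S))"
    using assms(8,10) unfolding boundary_sparse_def by (simp add: not_less)
  show ?thesis
    using boundary_bound_arith[OF assms(2,3) _ not_sparse assms(7)] split by simp
qed

end
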